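(* Let $(M(t),Z(t))$ be the solution of $\mathrm{d}M(t)=Z(t)\,\mathrm{d}t$, $\mathrm{d}Z(t)=-Z(t)\,\mathrm{d}t+\mathrm{d}W(t)$, with $W$ a standard one-dimensional Wiener process and $M$ regarded modulo $2\pi$. Then for any nonzero integers $k,\ell$, \[ \langle e^{i\ell m},e^{ikm}\rangle_{M,Z}=e^{k^2/2}\,\delta_{k\ell}\sum_{n=0}^\infty\frac{(-1)^nk^{2n}}{(n+k^2/2)\,2^n\,n!}, \] which for $k=\ell=1$ becomes $\langle e^{im},e^{im}\rangle_{M,Z}=\sqrt{2e\pi}\,\mathrm{erf}\big(\tfrac1{\sqrt2}\big)$.
   Context: $A_{M,Z}:=\frac12\partial_z^2-z\partial_z+z\partial_m$ is the generator of $(M,Z)$ on functions of $(m,z)\in(\mathbb{R}/2\pi\mathbb{Z})\times\mathbb{R}$. For $k\ne0$, $A_{M,Z}^{-1}e^{ikm}$ denotes the function $g_k(z)e^{ikm}$ with $g_k\in L^2(\mathbb{R},e^{-z^2}\mathrm{d}z)$ satisfying $A_{M,Z}(g_ke^{ikm})=e^{ikm}$. The form is $\langle\varphi_1,\varphi_2\rangle_{M,Z}:=-\int_{\mathbb{R}}\int_0^{2\pi}\varphi_1^*(m)\,(A_{M,Z}^{-1}\varphi_2)(m,z)\,\frac{1}{2\pi}\frac{e^{-z^2}}{\sqrt\pi}\,\mathrm{d}m\,\mathrm{d}z$. $\delta_{k\ell}$ is the Kronecker delta. *)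

theory Defs
  imports "HOL-Analysis.Analysis"
begin

definition pz :: "(real \<Rightarrow> real \<Rightarrow> complex) \<Rightarrow> real \<Rightarrow> real \<Rightarrow> complex" where
  "pz f m z = vector_derivative (\<lambda>w. f m w) (at z)"

definition pm :: "(real \<Rightarrow> real \<Rightarrow> complex) \<Rightarrow> real \<Rightarrow> real \<Rightarrow> complex" where
  "pm f m z = vector_derivative (\<lambda>u. f u z) (at m)"

definition AMZ :: "(real \<Rightarrow> real \<Rightarrow> complex) \<Rightarrow> real \<Rightarrow> real \<Rightarrow> complex" where
  "AMZ f m z = (1/2) * pz (pz f) m z - complex_of_real z * pz f m z
                + complex_of_real z * pm f m z"

definition admissible_profile :: "(real \<Rightarrow> complex) \<Rightarrow> bool" where
  "admissible_profile g \<longleftrightarrow>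
     (\<exists>g'. (\<forall>z. (g has_vector_derivative g' z) (at z))
         \<and> (\<forall>z. g' differentiable (at z)))
     \<and> integrable lborel (\<lambda>z. (cmod (g z))\<^sup>2 * exp (- z\<^sup>2))"

definition AMZ_inv_exp :: "int \<Rightarrow> real \<Rightarrow> real \<Rightarrow> complex" where
  "AMZ_inv_exp k = (THE h. \<exists>g. admissible_profile g
       \<and> h = (\<lambda>m z. g z * exp (\<i> * of_int k * of_real m))
       \<and> (\<forall>m z. AMZ h m z = exp (\<i> * of_int k * of_real m)))"

definition MZ_form_exp :: "int \<Rightarrow> int \<Rightarrow> complex" where
  "MZ_form_exp l k = - (LINT z|lborel. (LBINT m=0..2*pi.
       cnj (exp (\<i> * of_int l * of_real m)) * AMZ_inv_exp k m z
       * of_real (1 / (2*pi) * exp (- z\<^sup>2) / sqrt pi)))"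

definition erf :: "real \<Rightarrow> real" where
  "erf x = 2 / sqrt pi * (LBINT t=0..x. exp (- t\<^sup>2))"

end

theory Submission
  imports Defs "HOL-Probability.Probability" "HOL-Real_Asymp.Real_Asymp"
begin

text \<open>
  For k \<noteq> 0 the profile g of A_MZ^-1 e^(ikm) = g(z) e^(ikm) solves g''/2 - z g' + i k z g = 1,
  and this equation has at most one solution in L^2(exp(-z^2) dz): for a homogeneous solution the
  flux Re(g' cnj(g)) exp(-z^2) is nondecreasing, and a positive value would force |g|^2 to grow
  like exp(z^2)/z, which is not exp(-z^2)-integrable; so the flux vanishes, g' = 0 and g = 0.
  A solution is the Feynman--Kac integral g(z) = - int_0^oo E_z[exp(ik(M(t) - M(0)))] dt, which is
  explicit because M(t) - M(0) is Gaussian. Integrating it against exp(-z^2)/sqrt(pi) (Fubini and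
  the Gaussian characteristic function) leaves exp(k^2/2) int_0^oo exp(-k^2 t/2 - k^2 exp(-t)/2) dt,
  and expanding the second exponential gives the series. For k = 1 the series is, up to a factor,
  the power series of int_0^(1/sqrt 2) exp(-t^2) dt.\<close>

lemma norm_remainder_le_of_vector_derivative_bound:
  fixes F :: "real \<Rightarrow> 'b::real_normed_vector"
  assumes der: "\<And>x. (F has_vector_derivative F' x) (at x)"
    and bound: "\<And>x. norm (F' x) \<le> B"
  shows "norm (F (z + h) - F z - h *\<^sub>R F' z) \<le> 2 * B * \<bar>h\<bar>"
proof -
  have "norm (F (z + h) - F z) \<le> B * norm ((z + h) - z)"
  proof (rule differentiable_bound[where S=UNIV and f'="\<lambda>x h. h *\<^sub>R F' x"])
    show "(F has_derivative (\<lambda>h. h *\<^sub>R F' x)) (at x within UNIV)" for x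
      using der[of x] by (simp add: has_vector_derivative_def)
    show "onorm (\<lambda>h. h *\<^sub>R F' x) \<le> B" for x
      using bound[of x] onorm_scaleR_left[OF bounded_linear_ident, of "F' x"]
      by (simp add: onorm_id)
  qed auto
  moreover have "norm (h *\<^sub>R F' z) \<le> B * \<bar>h\<bar>"
    using mult_right_mono[OF bound[of z] abs_ge_zero[of h]] by (simp add: mult.commute)
  ultimately show ?thesis
    using norm_triangle_ineq4[of "F (z + h) - F z" "h *\<^sub>R F' z"] by simp
qed

lemma tendsto_integral_at_dominated:
  fixes s :: "real \<Rightarrow> 'a \<Rightarrow> 'b::{banach, second_countable_topology}"
  assumes meas: "f \<in> borel_measurable M" "\<And>h. s h \<in> borel_measurable M"
    and w: "integrable M w"
    and lim: "\<And>t. t \<in> space M \<Longrightarrow> ((\<lambda>h. s h t) \<longlongrightarrow> f t) (at x)"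
    and bound: "\<And>h t. t \<in> space M \<Longrightarrow> norm (s h t) \<le> w t"
  shows "((\<lambda>h. integral\<^sup>L M (s h)) \<longlongrightarrow> integral\<^sup>L M f) (at x)"
  unfolding tendsto_at_iff_sequentially o_def
proof (intro allI impI)
  fix X :: "nat \<Rightarrow> real" assume X: "\<forall>i. X i \<in> UNIV - {x}" "X \<longlonglongrightarrow> x"
  show "(\<lambda>n. integral\<^sup>L M (s (X n))) \<longlonglongrightarrow> integral\<^sup>L M f"
  proof (rule integral_dominated_convergence[OF meas(1) meas(2) w])
    show "AE t in M. (\<lambda>n. s (X n) t) \<longlonglongrightarrow> f t"
      using lim X unfolding tendsto_at_iff_sequentially o_def by auto
    show "AE t in M. norm (s (X n) t) \<le> w t" for n
      using bound by auto
  qed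
qed

lemma has_vector_derivative_integral_dominated:
  fixes f f' :: "real \<Rightarrow> 'a \<Rightarrow> complex" and w :: "'a \<Rightarrow> real"
  assumes meas: "\<And>z. f z \<in> borel_measurable M" "\<And>z. f' z \<in> borel_measurable M"
    and int: "\<And>z. integrable M (f z)"
    and w: "integrable M w"
    and der: "\<And>z t. t \<in> space M \<Longrightarrow> ((\<lambda>z. f z t) has_vector_derivative f' z t) (at z)"
    and bound: "\<And>z t. t \<in> space M \<Longrightarrow> norm (f' z t) \<le> w t"
  shows "((\<lambda>z. integral\<^sup>L M (f z)) has_vector_derivative integral\<^sup>L M (f' z)) (at z)"
proof -
  have int': "integrable M (f' y)" for y
    using bound by (intro Bochner_Integration.integrable_bound[OF w meas(2)])
      (auto intro: order_trans[OF _ abs_ge_self])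
  define R where "R h t = f (z + h) t - f z t - h *\<^sub>R f' z t" for h t
  define D where "D h t = norm (R h t) / norm h" for h t
  have D_bound: "norm (D h t) \<le> 2 * w t" if t: "t \<in> space M" for h t
  proof -
    have "norm (R h t) \<le> 2 * w t * \<bar>h\<bar>"
      unfolding R_def by (rule norm_remainder_le_of_vector_derivative_bound[OF der[OF t] bound[OF t]])
    moreover have "0 \<le> w t"
      using bound[OF t, of z] norm_ge_zero order_trans by blast
    ultimately show ?thesis
      by (cases "h = 0") (simp_all add: D_def divide_le_eq mult.commute)
  qed
  have "((\<lambda>h. integral\<^sup>L M (D h)) \<longlongrightarrow> integral\<^sup>L M (\<lambda>t. 0)) (at 0)"
  proof (rule tendsto_integral_at_dominated[where w="\<lambda>t. 2 * w t"])
    show "D h \<in> borel_measurable M" for h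
      unfolding D_def R_def using meas by measurable
    show "((\<lambda>h. D h t) \<longlongrightarrow> 0) (at 0)" if "t \<in> space M" for t
      using der[OF that, of z] unfolding has_vector_derivative_def has_derivative_at D_def R_def
      by simp
    show "integrable M (\<lambda>t. 2 * w t)"
      using w by simp
    show "norm (D h t) \<le> 2 * w t" if "t \<in> space M" for h t
      using D_bound[OF that] .
  qed simp
  then have D_lim: "((\<lambda>h. integral\<^sup>L M (D h)) \<longlongrightarrow> 0) (at 0)"
    by simp
  have quotient_le: "norm (integral\<^sup>L M (f (z + h)) - integral\<^sup>L M (f z) - h *\<^sub>R integral\<^sup>L M (f' z))
      / norm h \<le> integral\<^sup>L M (D h)" for h
  proof -
    have "integral\<^sup>L M (f (z + h)) - integral\<^sup>L M (f z) - h *\<^sub>R integral\<^sup>L M (f' z)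
        = integral\<^sup>L M (R h)"
      unfolding R_def using int int' by simp
    moreover have "integral\<^sup>L M (D h) = (LINT t|M. norm (R h t)) / norm h"
      unfolding D_def by simp
    ultimately show ?thesis
      using integral_norm_bound[of M "R h"] by (simp add: divide_right_mono)
  qed
  have "((\<lambda>h. norm (integral\<^sup>L M (f (z + h)) - integral\<^sup>L M (f z) - h *\<^sub>R integral\<^sup>L M (f' z))
      / norm h) \<longlongrightarrow> 0) (at 0)"
    by (rule tendsto_sandwich[OF _ _ tendsto_const D_lim])
      (rule always_eventually, simp, rule always_eventually, rule allI, rule quotient_le)
  then show ?thesis
    unfolding has_vector_derivative_def has_derivative_at by (simp add: bounded_linear_scaleR_left)
qed

lemma borel_measurable_of_has_vector_derivative:
  assumes "\<And>z. (g has_vector_derivative g' z) (at z)"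
  shows "g \<in> borel_measurable borel"
  using assms has_vector_derivative_continuous
  by (intro borel_measurable_continuous_onI continuous_at_imp_continuous_on) blast

lemma has_vector_derivative_exp_of_real:
  "((\<lambda>u. exp (c * complex_of_real u)) has_vector_derivative c * exp (c * complex_of_real x)) (at x)"
proof -
  have "((\<lambda>w. exp (c * w)) has_field_derivative exp (c * of_real x) * c) (at (of_real x))"
    by (auto intro!: derivative_eq_intros)
  from has_vector_derivative_real_field[OF this] show ?thesis
    by (simp add: mult.commute)
qed

lemma set_integral_Ioi_FTC:
  fixes Q q :: "real \<Rightarrow> 'a::euclidean_space"
  assumes "\<And>x. x > 0 \<Longrightarrow> (Q has_vector_derivative q x) (at x)"
    and "\<And>x. x > 0 \<Longrightarrow> isCont q x"
    and "set_integrable lborel {0<..} q"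
    and "(Q \<longlongrightarrow> A) (at_right 0)" and "(Q \<longlongrightarrow> B) at_top"
  shows "set_lebesgue_integral lborel {0<..} q = B - A"
proof -
  have "interval_lebesgue_integral lborel (ereal 0) \<infinity> q = B - A"
    using assms by (intro interval_integral_FTC_integrable[where F=Q])
      (auto simp: ereal_tendsto_simps1)
  then show ?thesis
    by (simp add: interval_lebesgue_integral_def)
qed

lemma set_integral_exp_neg_mult_Ioi:
  fixes b :: real
  assumes b: "b > 0"
  shows "set_integrable lborel {0<..} (\<lambda>t. exp (- b * t))"
    and "set_lebesgue_integral lborel {0<..} (\<lambda>t. exp (- b * t)) = 1 / b"
proof -
  have "((\<lambda>t. exp (- b * t)) \<longlongrightarrow> 0) at_top"
    using b by real_asymp
  then have "((\<lambda>t. - exp (- b * t) / b) \<longlongrightarrow> 0) at_top"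
    using tendsto_minus[OF tendsto_divide[OF _ tendsto_const[of b]]] by fastforce
  moreover have "((\<lambda>t. - exp (- b * t) / b) \<longlongrightarrow> - 1 / b) (at_right 0)"
    using b by (auto intro!: tendsto_eq_intros)
  moreover have "((\<lambda>t. - exp (- b * t) / b) has_real_derivative exp (- b * t)) (at t)" for t
    using b by (auto intro!: derivative_eq_intros)
  ultimately have "set_integrable lborel (einterval (ereal 0) \<infinity>) (\<lambda>t. exp (- b * t))
    \<and> interval_lebesgue_integral lborel (ereal 0) \<infinity> (\<lambda>t. exp (- b * t)) = 0 - (- 1 / b)"
    using interval_integral_FTC_nonneg[where F="\<lambda>t. - exp (- b * t) / b" and a="ereal 0" and b=\<infinity>]
    by (auto simp: ereal_tendsto_simps1)
  then show "set_integrable lborel {0<..} (\<lambda>t. exp (- b * t))"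
    and "set_lebesgue_integral lborel {0<..} (\<lambda>t. exp (- b * t)) = 1 / b"
    by (auto simp: interval_lebesgue_integral_def)
qed

lemma exp_neg_square_eq_normal_density: "exp (- (x::real)\<^sup>2) = sqrt pi * normal_density 0 (sqrt (1/2)) x"
  by (simp add: normal_density_def real_sqrt_divide power_divide)

lemma integrable_exp_neg_square: "integrable lborel (\<lambda>x::real. exp (- x\<^sup>2))"
  unfolding exp_neg_square_eq_normal_density by simp

lemma integral_exp_neg_square: "(LINT x|lborel. exp (- x\<^sup>2)) = sqrt pi"
  unfolding exp_neg_square_eq_normal_density by simp

lemma integral_exp_i_mult_gaussian:
  "(LINT z|lborel. exp (\<i> * of_real b * of_real z) * of_real (exp (- z\<^sup>2)))
    = of_real (sqrt pi * exp (- b\<^sup>2 / 4))"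
proof -
  define s where "s = b / sqrt 2"
  define I where "I = (LINT z|lborel. exp (\<i> * of_real b * of_real z) * of_real (exp (- z\<^sup>2)))"
  have density: "std_normal_density (0 + sqrt 2 * z) *\<^sub>R iexp (s * (0 + sqrt 2 * z))
      = of_real (1 / sqrt (2 * pi)) * (exp (\<i> * of_real b * of_real z) * of_real (exp (- z\<^sup>2)))" for z
  proof -
    have square: "- (0 + sqrt 2 * z)\<^sup>2 / 2 = - z\<^sup>2" and frequency: "s * (0 + sqrt 2 * z) = b * z"
      by (simp_all add: power_mult_distrib s_def)
    show ?thesis
      unfolding std_normal_density_def square frequency scaleR_conv_of_real by (simp add: mult_ac)
  qed
  have "of_real (exp (- s\<^sup>2 / 2)) = char std_normal_distribution s"
    by (simp add: char_std_normal_distribution)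
  also have "\<dots> = (CLINT x|lborel. std_normal_density x *\<^sub>R iexp (s * x))"
    unfolding char_def by (subst integral_density) auto
  also have "\<dots> = \<bar>sqrt 2\<bar> *\<^sub>R (CLINT z|lborel. std_normal_density (0 + sqrt 2 * z) *\<^sub>R iexp (s * (0 + sqrt 2 * z)))"
    by (rule lborel_integral_real_affine) simp
  also have "\<dots> = of_real (sqrt 2 * (1 / sqrt (2 * pi))) * I"
    unfolding density I_def by (simp add: scaleR_conv_of_real)
  also have "sqrt 2 * (1 / sqrt (2 * pi)) = 1 / sqrt pi"
    by (simp add: real_sqrt_mult)
  finally have "of_real (sqrt pi) * of_real (exp (- b\<^sup>2 / 4)) = of_real (sqrt pi) * (of_real (1 / sqrt pi) * I)"
    by (simp add: s_def power_divide)
  also have "\<dots> = I"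
    by (simp flip: mult.assoc of_real_mult)
  finally show ?thesis
    unfolding I_def by simp
qed

lemma interval_integral_fourier_modes:
  "(LBINT m=0..2*pi. cnj (exp (\<i> * of_int l * of_real m)) * exp (\<i> * of_int k * of_real m))
    = (if k = l then 2 * pi else 0)"
proof -
  define n where "n = k - l"
  have integrand: "cnj (exp (\<i> * of_int l * of_real m)) * exp (\<i> * of_int k * of_real m)
      = exp (\<i> * of_int n * of_real m)" for m
    unfolding n_def exp_cnj by (simp add: algebra_simps flip: exp_add)
  show ?thesis
  proof (cases "k = l")
    case True
    have "(LBINT m=ereal 0..ereal (2 * pi). (1::complex)) = of_real (2 * pi) - of_real 0"
      by (rule interval_integral_FTC_finite) (auto intro!: derivative_eq_intros continuous_intros)
    then show ?thesis
      unfolding integrand n_def zero_ereal_def using True by simp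
  next
    case False
    then have n: "n \<noteq> 0"
      unfolding n_def by simp
    have "(LBINT m=ereal 0..ereal (2 * pi). exp (\<i> * of_int n * of_real m))
        = exp (\<i> * of_int n * of_real (2 * pi)) / (\<i> * of_int n) - exp (\<i> * of_int n * of_real 0) / (\<i> * of_int n)"
    proof (rule interval_integral_FTC_finite)
      show "continuous_on {min 0 (2 * pi)..max 0 (2 * pi)} (\<lambda>m. exp (\<i> * of_int n * complex_of_real m))"
        by (intro continuous_intros)
      fix x
      have "((\<lambda>m. exp ((\<i> * of_int n) * of_real m)) has_vector_derivative
          (\<i> * of_int n) * exp ((\<i> * of_int n) * of_real x)) (at x)"
        by (rule has_vector_derivative_exp_of_real)
      then have "((\<lambda>m. exp (\<i> * of_int n * of_real m) / (\<i> * of_int n)) has_vector_derivative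
          exp (\<i> * of_int n * of_real x)) (at x)"
        using has_vector_derivative_mult_left[of _ _ _ "1 / (\<i> * of_int n)"] n by (fastforce simp: field_simps)
      then show "((\<lambda>m. exp (\<i> * of_int n * of_real m) / (\<i> * of_int n)) has_vector_derivative
          exp (\<i> * of_int n * complex_of_real x)) (at x within {min 0 (2 * pi)..max 0 (2 * pi)})"
        by (rule has_vector_derivative_at_within)
    qed
    moreover have "exp (\<i> * of_int n * of_real (2 * pi)) = 1"
      using exp_integer_2pi[of "of_int n"] by (simp add: mult_ac)
    ultimately show ?thesis
      unfolding integrand zero_ereal_def using False by simp
  qed
qed

lemma integral_mult_exp_eq_suminf:
  fixes w s :: "'a \<Rightarrow> real"
  assumes int: "\<And>n. integrable M (\<lambda>t. w t * s t ^ n)"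
    and w: "\<And>t. 0 \<le> w t"
    and summable: "summable (\<lambda>n. (LINT t|M. w t * \<bar>s t\<bar> ^ n) / fact n)"
  shows "(LINT t|M. w t * exp (s t)) = (\<Sum>n. (LINT t|M. w t * s t ^ n) / fact n)"
proof -
  define f where "f n t = w t * s t ^ n / fact n" for n t
  have norm_f: "norm (f n t) = w t * \<bar>s t\<bar> ^ n / fact n" for n t
    unfolding f_def using w[of t] by (simp add: abs_mult power_abs)
  have sums_f: "(\<lambda>n. f n t) sums (w t * exp (s t))" for t
  proof -
    have "(\<lambda>n. w t * (s t ^ n /\<^sub>R fact n)) sums (w t * exp (s t))"
      by (intro sums_mult exp_converges)
    then show ?thesis
      unfolding f_def by (simp add: divide_inverse ac_simps)
  qed
  have summable_norm: "summable (\<lambda>n. norm (f n t))" for t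
  proof -
    have "summable (\<lambda>n. w t * (\<bar>s t\<bar> ^ n /\<^sub>R fact n))"
      by (intro summable_mult sums_summable[OF exp_converges])
    then show ?thesis
      unfolding norm_f by (simp add: divide_inverse ac_simps)
  qed
  have "(LINT t|M. (\<Sum>n. f n t)) = (\<Sum>n. integral\<^sup>L M (f n))"
  proof (rule integral_suminf)
    show "integrable M (f n)" for n
      unfolding f_def using int by simp
    show "summable (\<lambda>n. LINT t|M. norm (f n t))"
      unfolding norm_f using summable by simp
  qed (rule AE_I2, rule summable_norm)
  moreover have "(\<Sum>n. f n t) = w t * exp (s t)" for t
    using sums_f by (rule sums_unique[symmetric])
  ultimately show ?thesis
    unfolding f_def by simp
qed

lemma integral_exp_neg_exp_series:
  fixes c :: real
  assumes c: "c > 0"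
  shows "(LINT t|lborel. indicator {0<..} t * (exp (- c * t) * exp (- c * exp (- t))))
    = (\<Sum>n. (- c) ^ n / (fact n * (real n + c)))"
proof -
  define e where "e n t = indicator {0<..} t * exp (- (real n + c) * t)" for n t
  have e: "integrable lborel (e n)" "integral\<^sup>L lborel (e n) = 1 / (real n + c)" for n
    using set_integral_exp_neg_mult_Ioi[of "real n + c"] c
    unfolding e_def set_integrable_def set_lebesgue_integral_def by auto
  have power: "indicator {0<..} t * exp (- c * t) * (a * exp (- t)) ^ n = a ^ n * e n t" for a n t
  proof -
    have "exp (- c * t) * exp (- t) ^ n = exp (- (real n + c) * t)"
      by (simp add: algebra_simps flip: exp_of_nat_mult exp_add)
    then show ?thesis
      unfolding e_def by (simp add: power_mult_distrib ac_simps)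
  qed
  have "(LINT t|lborel. indicator {0<..} t * exp (- c * t) * exp (- c * exp (- t)))
      = (\<Sum>n. (LINT t|lborel. indicator {0<..} t * exp (- c * t) * (- c * exp (- t)) ^ n) / fact n)"
  proof (rule integral_mult_exp_eq_suminf)
    show "integrable lborel (\<lambda>t. indicator {0<..} t * exp (- c * t) * (- c * exp (- t)) ^ n)" for n
      unfolding power using e by simp
    define a where "a n = c ^ n / fact n * (1 / (real n + c))" for n
    have "(LINT t|lborel. indicator {0<..} t * exp (- c * t) * \<bar>- c * exp (- t)\<bar> ^ n) / fact n = a n" for n
      unfolding a_def using power[of _ c] e c by (simp add: abs_mult)
    moreover have "norm (a n) \<le> 1 / c * (inverse (fact n) * c ^ n)" for n
    proof -
      have "1 / (real n + c) \<le> 1 / c"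
        using c by (intro divide_left_mono) auto
      then have "c ^ n / fact n * (1 / (real n + c)) \<le> c ^ n / fact n * (1 / c)"
        by (rule mult_left_mono) (use c in simp)
      then show ?thesis
        unfolding a_def using c by (simp add: divide_inverse mult_ac)
    qed
    then have "summable a"
      by (intro summable_comparison_test[OF _ summable_mult[OF summable_exp[of c]], of _ "1 / c"]) auto
    ultimately show "summable (\<lambda>n. (LINT t|lborel. indicator {0<..} t * exp (- c * t) * \<bar>- c * exp (- t)\<bar> ^ n) / fact n)"
      by simp
  qed (simp add: indicator_def)
  also have "\<dots> = (\<Sum>n. (- c) ^ n / (fact n * (real n + c)))"
    unfolding power using e by (simp add: mult.commute)
  finally show ?thesis
    by (simp add: mult.assoc)
qed

lemma integral_indicator_Icc_power:
  fixes x :: real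
  assumes "0 \<le> x"
  shows "(LINT t|lborel. indicator {0..x} t * t ^ m) = x ^ Suc m / real (Suc m)"
proof -
  have "(LBINT t=ereal 0..ereal x. t ^ m) = x ^ Suc m / real (Suc m) - 0 ^ Suc m / real (Suc m)"
  proof (rule interval_integral_FTC_finite)
    show "((\<lambda>t. t ^ Suc m / real (Suc m)) has_vector_derivative t ^ m) (at t within {min 0 x..max 0 x})" for t
      using DERIV_cdivide[OF DERIV_pow[of "Suc m" t], of "real (Suc m)"]
      by (simp add: has_real_derivative_iff_has_vector_derivative has_vector_derivative_at_within)
  qed (intro continuous_intros)
  then show ?thesis
    using assms by (simp add: interval_integral_Icc set_lebesgue_integral_def)
qed

lemma interval_integral_exp_neg_square_series:
  fixes x :: real
  assumes x: "0 \<le> x"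
  shows "(LBINT t=0..x. exp (- t\<^sup>2)) = (\<Sum>n. (-1) ^ n * x ^ (2*n+1) / (fact n * real (2*n+1)))"
proof -
  have "set_integrable lborel {0..x} (\<lambda>t. t ^ m)" for m
    by (intro borel_integrable_atLeastAtMost' continuous_intros)
  then have integrable: "integrable lborel (\<lambda>t. indicator {0..x} t * t ^ m)" for m
    unfolding set_integrable_def by simp
  have moment: "(LINT t|lborel. indicator {0..x} t * t ^ (2*n)) = x ^ (2*n+1) / real (2*n+1)" for n
    using integral_indicator_Icc_power[OF x] by simp
  have square: "(- t\<^sup>2) ^ n = (-1) ^ n * t ^ (2*n)" "\<bar>- t\<^sup>2\<bar> ^ n = t ^ (2*n)" for t :: real and n
    by (subst power_minus, simp_all add: power_mult)
  have signed_moment: "(LINT t|lborel. indicator {0..x} t * (- t\<^sup>2) ^ n)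
      = (-1) ^ n * (x ^ (2*n+1) / real (2*n+1))" for n
  proof -
    have "(LINT t|lborel. indicator {0..x} t * (- t\<^sup>2) ^ n)
        = (LINT t|lborel. (-1) ^ n * (indicator {0..x} t * t ^ (2*n)))"
      by (intro Bochner_Integration.integral_cong) (simp_all add: square mult.left_commute)
    then show ?thesis
      by (simp add: moment)
  qed
  have "(LBINT t=0..x. exp (- t\<^sup>2)) = (LINT t|lborel. indicator {0..x} t * exp (- t\<^sup>2))"
    unfolding zero_ereal_def using x by (simp add: interval_integral_Icc set_lebesgue_integral_def)
  also have "\<dots> = (\<Sum>n. (LINT t|lborel. indicator {0..x} t * (- t\<^sup>2) ^ n) / fact n)"
  proof (rule integral_mult_exp_eq_suminf)
    show "integrable lborel (\<lambda>t. indicator {0..x} t * (- t\<^sup>2) ^ n)" for n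
      unfolding square using integrable[of "2*n"] by (simp add: mult.left_commute)
    have "x ^ (2*n+1) / real (2*n+1) / fact n \<le> x * (inverse (fact n) * (x\<^sup>2) ^ n)" for n
    proof -
      have "x ^ (2*n+1) / real (2*n+1) \<le> x ^ (2*n+1)"
        using mult_left_le[of "1 / real (2*n+1)" "x ^ (2*n+1)"] x by simp
      then have "x ^ (2*n+1) / real (2*n+1) / fact n \<le> x ^ (2*n+1) / fact n"
        by (rule divide_right_mono) simp
      also have "\<dots> = x * (inverse (fact n) * (x\<^sup>2) ^ n)"
        by (simp add: power_add power_mult divide_inverse mult_ac power2_eq_square power_mult_distrib)
      finally show ?thesis .
    qed
    then show "summable (\<lambda>n. (LINT t|lborel. indicator {0..x} t * \<bar>- t\<^sup>2\<bar> ^ n) / fact n)"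
      unfolding square moment using x
      by (intro summable_comparison_test[OF _ summable_mult[OF summable_exp[of "x\<^sup>2"]], of _ x]) auto
  qed (simp add: indicator_def)
  also have "\<dots> = (\<Sum>n. (-1) ^ n * x ^ (2*n+1) / (fact n * real (2*n+1)))"
    unfolding signed_moment by (simp add: field_simps)
  finally show ?thesis .
qed

lemma integrable_weighted_norm_sq_diff:
  fixes f g :: "'a \<Rightarrow> complex"
  assumes "integrable M (\<lambda>z. (cmod (f z))\<^sup>2 * w z)" "integrable M (\<lambda>z. (cmod (g z))\<^sup>2 * w z)"
    and [measurable]: "f \<in> borel_measurable M" "g \<in> borel_measurable M" "w \<in> borel_measurable M"
    and w: "\<And>z. 0 \<le> w z"
  shows "integrable M (\<lambda>z. (cmod (f z - g z))\<^sup>2 * w z)"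
proof (rule Bochner_Integration.integrable_bound)
  show "integrable M (\<lambda>z. 2 * ((cmod (f z))\<^sup>2 * w z) + 2 * ((cmod (g z))\<^sup>2 * w z))"
    using assms(1,2) by simp
  have "(cmod (f z - g z))\<^sup>2 \<le> 2 * (cmod (f z))\<^sup>2 + 2 * (cmod (g z))\<^sup>2" for z
  proof -
    have "(cmod (f z - g z))\<^sup>2 \<le> (cmod (f z) + cmod (g z))\<^sup>2"
      using norm_triangle_ineq4[of "f z" "g z"] by (simp add: power_mono)
    also have "\<dots> \<le> 2 * (cmod (f z))\<^sup>2 + 2 * (cmod (g z))\<^sup>2"
      using zero_le_power2[of "cmod (f z) - cmod (g z)"] by (simp add: power2_eq_square algebra_simps)
    finally show ?thesis .
  qed
  then have "(cmod (f z - g z))\<^sup>2 * w z \<le> 2 * ((cmod (f z))\<^sup>2 * w z) + 2 * ((cmod (g z))\<^sup>2 * w z)" for z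
    using mult_right_mono[OF _ w] by (fastforce simp: algebra_simps)
  then show "AE z in M. norm ((cmod (f z - g z))\<^sup>2 * w z)
      \<le> norm (2 * ((cmod (f z))\<^sup>2 * w z) + 2 * ((cmod (g z))\<^sup>2 * w z))"
    using w by (intro AE_I2) (simp add: order_trans[OF _ abs_ge_self])
qed simp

lemma not_integrable_inverse_Ici:
  assumes a: "a > 0" and c: "c > 0"
  shows "\<not> integrable lborel (\<lambda>z::real. indicator {a..} z * (c / z))"
proof
  assume I: "integrable lborel (\<lambda>z::real. indicator {a..} z * (c / z))"
  define T where "T = (LINT z|lborel. indicator {a..} z * (c / z))"
  define b where "b = exp (T / c + ln a + 1)" \<comment> \<open>so that the integral of c/z over [a, b] is T + c\<close>
  have "T \<ge> 0"
    unfolding T_def using a c by (intro integral_nonneg_AE AE_I2) (auto simp: indicator_def)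
  then have "ln a \<le> T / c + ln a + 1"
    using c by simp
  then have b: "a \<le> b"
    unfolding b_def using a by (metis exp_le_cancel_iff exp_ln)
  have "(LBINT z=a..b. c / z) = c * ln b - c * ln a"
  proof (rule interval_integral_FTC_finite)
    show "continuous_on {min a b..max a b} (\<lambda>z. c / z)"
      using a b by (intro continuous_intros) auto
    show "((\<lambda>z. c * ln z) has_vector_derivative c / x) (at x within {min a b..max a b})"
      if "min a b \<le> x" "x \<le> max a b" for x
      using that a b
      by (auto intro!: derivative_eq_intros simp: has_real_derivative_iff_has_vector_derivative[symmetric])
  qed
  also have "\<dots> = T + c"
    unfolding b_def using c by (simp add: algebra_simps)
  finally have "T + c = (LINT z|lborel. indicator {a..b} z * (c / z))"
    using b by (simp add: interval_integral_Icc set_lebesgue_integral_def)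
  also have "\<dots> \<le> T"
    unfolding T_def using a c
    by (intro integral_mono[OF _ I] Bochner_Integration.integrable_bound[OF I])
      (auto simp: indicator_def)
  finally show False
    using c by simp
qed

section \<open>Uniqueness of weighted square-integrable solutions\<close>

lemma exp_square_div_le_of_deriv_ge:
  fixes h h' :: "real \<Rightarrow> real"
  assumes a: "a > 0" and c: "c \<ge> 0" and z: "a \<le> z"
    and der: "\<And>z. z \<ge> a \<Longrightarrow> (h has_real_derivative h' z) (at z)"
    and ge: "\<And>z. z \<ge> a \<Longrightarrow> h' z \<ge> 2 * c * exp (z\<^sup>2)"
  shows "h a - c * exp (a\<^sup>2) / a + c * exp (z\<^sup>2) / z \<le> h z"
proof -
  define \<psi> where "\<psi> z = h z - c * exp (z\<^sup>2) / z" for z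
  have "\<psi> a \<le> \<psi> z"
  proof (rule DERIV_nonneg_imp_nondecreasing[OF z])
    fix x assume x: "a \<le> x" "x \<le> z"
    have "(\<psi> has_real_derivative h' x - c * (exp (x\<^sup>2) * (2 * x) * x - exp (x\<^sup>2)) / x\<^sup>2) (at x)"
      unfolding \<psi>_def using x a
      by (auto intro!: derivative_eq_intros der simp: power2_eq_square field_simps)
    moreover have "c * (exp (x\<^sup>2) * (2 * x) * x - exp (x\<^sup>2)) \<le> 2 * c * exp (x\<^sup>2) * x\<^sup>2"
      using c by (simp add: algebra_simps power2_eq_square)
    then have "c * (exp (x\<^sup>2) * (2 * x) * x - exp (x\<^sup>2)) / x\<^sup>2 \<le> 2 * c * exp (x\<^sup>2)"
      using x a by (simp add: divide_le_eq)
    ultimately show "\<exists>y. (\<psi> has_real_derivative y) (at x) \<and> 0 \<le> y"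
      using ge[of x] x by force
  qed
  then show ?thesis
    unfolding \<psi>_def by simp
qed

lemma not_integrable_of_deriv_ge_exp_square:
  fixes h h' :: "real \<Rightarrow> real"
  assumes a: "a > 0" and c: "c > 0"
    and der: "\<And>z. z \<ge> a \<Longrightarrow> (h has_real_derivative h' z) (at z)"
    and ge: "\<And>z. z \<ge> a \<Longrightarrow> h' z \<ge> 2 * c * exp (z\<^sup>2)"
  shows "\<not> integrable lborel (\<lambda>z. h z * exp (- z\<^sup>2))"
proof
  assume int: "integrable lborel (\<lambda>z. h z * exp (- z\<^sup>2))"
  define K where "K = \<bar>h a - c * exp (a\<^sup>2) / a\<bar>"
  have bound: "norm (indicator {a..} z * (c / z)) \<le> norm (h z * exp (- z\<^sup>2) + K * exp (- z\<^sup>2))" for z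
  proof (cases "a \<le> z")
    case True
    have z: "0 < z"
      using a True by linarith
    have lower: "c * exp (z\<^sup>2) / z \<le> h z + K"
      using exp_square_div_le_of_deriv_ge[OF a less_imp_le[OF c] True der ge] abs_ge_minus_self[of "h a - c * exp (a\<^sup>2) / a"]
      unfolding K_def by linarith
    have "norm (indicator {a..} z * (c / z)) = c / z"
      using True z c by simp
    also have "\<dots> = c * exp (z\<^sup>2) / z * exp (- z\<^sup>2)"
      by (simp add: exp_minus)
    also have "\<dots> \<le> (h z + K) * exp (- z\<^sup>2)"
      using lower by (rule mult_right_mono) simp
    also have "\<dots> \<le> norm (h z * exp (- z\<^sup>2) + K * exp (- z\<^sup>2))"
      unfolding real_norm_def distrib_right by (rule abs_ge_self)
    finally show ?thesis .
  qed simp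
  have "integrable lborel (\<lambda>z. h z * exp (- z\<^sup>2) + K * exp (- z\<^sup>2))"
    using int integrable_exp_neg_square by simp
  moreover have "(\<lambda>z. indicator {a..} z * (c / z)) \<in> borel_measurable lborel"
    by measurable
  ultimately have "integrable lborel (\<lambda>z. indicator {a..} z * (c / z))"
    using bound by (blast intro: Bochner_Integration.integrable_bound AE_I2)
  with not_integrable_inverse_Ici[OF a c] show False ..
qed

text \<open>The real form of a solution g = u + i v of g''/2 - z g' + i \<kappa> z g = 0, whose flux
  Re(g' cnj(g)) is u1 u + v1 v.\<close>

lemma flux_nonpos_of_L2_solution:
  fixes u v u1 v1 u2 v2 :: "real \<Rightarrow> real" and \<kappa> :: real
  assumes du: "\<And>z. (u has_real_derivative u1 z) (at z)"
    and dv: "\<And>z. (v has_real_derivative v1 z) (at z)"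
    and du1: "\<And>z. (u1 has_real_derivative u2 z) (at z)"
    and dv1: "\<And>z. (v1 has_real_derivative v2 z) (at z)"
    and ode_u: "\<And>z. u2 z = 2 * z * u1 z + 2 * \<kappa> * z * v z"
    and ode_v: "\<And>z. v2 z = 2 * z * v1 z - 2 * \<kappa> * z * u z"
    and L2: "integrable lborel (\<lambda>z. ((u z)\<^sup>2 + (v z)\<^sup>2) * exp (- z\<^sup>2))"
  shows "u1 z0 * u z0 + v1 z0 * v z0 \<le> 0"
proof (rule ccontr)
  assume flux_pos: "\<not> ?thesis"
  define F where "F z = (u1 z * u z + v1 z * v z) * exp (- z\<^sup>2)" for z
  have F_deriv: "(F has_real_derivative ((u1 z)\<^sup>2 + (v1 z)\<^sup>2) * exp (- z\<^sup>2)) (at z)" for z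
  proof -
    have "(F has_real_derivative (u2 z * u z + u1 z * u1 z + (v2 z * v z + v1 z * v1 z)) * exp (- z\<^sup>2)
        + (u1 z * u z + v1 z * v z) * (exp (- z\<^sup>2) * (- (2 * z)))) (at z)"
      unfolding F_def by (auto intro!: derivative_eq_intros du dv du1 dv1 simp: power2_eq_square)
    then show ?thesis
      unfolding ode_u ode_v by (simp add: algebra_simps power2_eq_square)
  qed
  define c where "c = F z0"
  have c: "c > 0"
    unfolding c_def F_def using flux_pos by simp
  have "c \<le> F z" if "z0 \<le> z" for z
    unfolding c_def
  proof (rule DERIV_nonneg_imp_nondecreasing[OF that])
    show "\<exists>y. (F has_real_derivative y) (at x) \<and> 0 \<le> y" for x
      using F_deriv[of x] by (intro exI[of _ "((u1 x)\<^sup>2 + (v1 x)\<^sup>2) * exp (- x\<^sup>2)"]) simp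
  qed
  then have flux_ge: "c * exp (z\<^sup>2) \<le> u z * u1 z + v z * v1 z" if "z0 \<le> z" for z
    using that unfolding F_def by (simp add: exp_minus field_simps)
  have "\<not> integrable lborel (\<lambda>z. ((u z)\<^sup>2 + (v z)\<^sup>2) * exp (- z\<^sup>2))"
  proof (rule not_integrable_of_deriv_ge_exp_square[of "max z0 1" c _ "\<lambda>z. 2 * (u z * u1 z + v z * v1 z)"])
    show "((\<lambda>z. (u z)\<^sup>2 + (v z)\<^sup>2) has_real_derivative 2 * (u z * u1 z + v z * v1 z)) (at z)" for z
      using DERIV_add[OF DERIV_mult[OF du du] DERIV_mult[OF dv dv]] by (simp add: power2_eq_square)
    show "2 * c * exp (z\<^sup>2) \<le> 2 * (u z * u1 z + v z * v1 z)" if "max z0 1 \<le> z" for z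
      using flux_ge[of z] that by simp
  qed (use c in auto)
  with L2 show False by contradiction
qed

lemma flux_eq_0_of_L2_solution:
  fixes u v u1 v1 u2 v2 :: "real \<Rightarrow> real" and \<kappa> :: real
  assumes du: "\<And>z. (u has_real_derivative u1 z) (at z)"
    and dv: "\<And>z. (v has_real_derivative v1 z) (at z)"
    and du1: "\<And>z. (u1 has_real_derivative u2 z) (at z)"
    and dv1: "\<And>z. (v1 has_real_derivative v2 z) (at z)"
    and ode_u: "\<And>z. u2 z = 2 * z * u1 z + 2 * \<kappa> * z * v z"
    and ode_v: "\<And>z. v2 z = 2 * z * v1 z - 2 * \<kappa> * z * u z"
    and L2: "integrable lborel (\<lambda>z. ((u z)\<^sup>2 + (v z)\<^sup>2) * exp (- z\<^sup>2))"
  shows "u1 z0 * u z0 + v1 z0 * v z0 = 0"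
proof -
  have reflect: "((\<lambda>z. f (- z)) has_real_derivative - f' (- z)) (at z)"
    if "\<And>z. (f has_real_derivative f' z) (at z)" for f f' :: "real \<Rightarrow> real" and z
    using DERIV_chain2[OF that[of "- z"] DERIV_minus[OF DERIV_ident]] by simp
  have "- u1 (- (- z0)) * u (- (- z0)) + - v1 (- (- z0)) * v (- (- z0)) \<le> 0"
  proof (rule flux_nonpos_of_L2_solution[of "\<lambda>z. u (- z)" "\<lambda>z. - u1 (- z)" "\<lambda>z. v (- z)"
        "\<lambda>z. - v1 (- z)" "\<lambda>z. u2 (- z)" "\<lambda>z. v2 (- z)" "- \<kappa>"])
    show "((\<lambda>z. u (- z)) has_real_derivative - u1 (- z)) (at z)"
      and "((\<lambda>z. v (- z)) has_real_derivative - v1 (- z)) (at z)" for z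
      by (rule reflect, rule du, rule reflect, rule dv)
    show "((\<lambda>z. - u1 (- z)) has_real_derivative u2 (- z)) (at z)"
      and "((\<lambda>z. - v1 (- z)) has_real_derivative v2 (- z)) (at z)" for z
      using DERIV_minus[OF reflect[OF du1]] DERIV_minus[OF reflect[OF dv1]] by simp_all
    show "u2 (- z) = 2 * z * - u1 (- z) + 2 * - \<kappa> * z * v (- z)"
      and "v2 (- z) = 2 * z * - v1 (- z) - 2 * - \<kappa> * z * u (- z)" for z
      using ode_u[of "- z"] ode_v[of "- z"] by simp_all
    show "integrable lborel (\<lambda>z. ((u (- z))\<^sup>2 + (v (- z))\<^sup>2) * exp (- z\<^sup>2))"
      using lborel_integrable_real_affine[OF L2, of "-1" 0] by simp
  qed
  then show ?thesis
    using flux_nonpos_of_L2_solution[OF assms, of z0] by simp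
qed

lemma L2_solution_homogeneous_eq_0:
  fixes g g1 g2 :: "real \<Rightarrow> complex" and \<kappa> :: real
  assumes \<kappa>: "\<kappa> \<noteq> 0"
    and d1: "\<And>z. (g has_vector_derivative g1 z) (at z)"
    and d2: "\<And>z. (g1 has_vector_derivative g2 z) (at z)"
    and ode: "\<And>z. g2 z / 2 - of_real z * g1 z + \<i> * of_real \<kappa> * of_real z * g z = 0"
    and L2: "integrable lborel (\<lambda>z. (cmod (g z))\<^sup>2 * exp (- z\<^sup>2))"
  shows "g z = 0"
proof -
  define u v u1 v1 u2 v2 where "u z = Re (g z)" and "v z = Im (g z)"
    and "u1 z = Re (g1 z)" and "v1 z = Im (g1 z)" and "u2 z = Re (g2 z)" and "v2 z = Im (g2 z)" for z
  note components = u_def v_def u1_def v1_def u2_def v2_def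
  have du: "(u has_real_derivative u1 z) (at z)" and dv: "(v has_real_derivative v1 z) (at z)"
    and du1: "(u1 has_real_derivative u2 z) (at z)" and dv1: "(v1 has_real_derivative v2 z) (at z)" for z
    using d1[of z] d2[of z] unfolding has_vector_derivative_complex_iff components by auto
  have "g2 z = 2 * of_real z * g1 z - 2 * \<i> * of_real \<kappa> * of_real z * g z" for z
    using ode[of z] by (simp add: field_simps)
  then have ode_u: "u2 z = 2 * z * u1 z + 2 * \<kappa> * z * v z"
    and ode_v: "v2 z = 2 * z * v1 z - 2 * \<kappa> * z * u z" for z
    unfolding components by simp_all
  have L2': "integrable lborel (\<lambda>z. ((u z)\<^sup>2 + (v z)\<^sup>2) * exp (- z\<^sup>2))"
    using L2 unfolding components by (simp add: cmod_power2)
  note flux = flux_eq_0_of_L2_solution[OF du dv du1 dv1 ode_u ode_v L2']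
  have "((\<lambda>z. u1 z * u z + v1 z * v z) has_real_derivative
      u2 z * u z + u1 z * u1 z + (v2 z * v z + v1 z * v1 z)) (at z)" for z
    by (auto intro!: derivative_eq_intros du dv du1 dv1)
  moreover have "u2 z * u z + u1 z * u1 z + (v2 z * v z + v1 z * v1 z)
      = 2 * z * (u1 z * u z + v1 z * v z) + (u1 z)\<^sup>2 + (v1 z)\<^sup>2" for z
    unfolding ode_u ode_v by (simp add: algebra_simps power2_eq_square)
  ultimately have "((\<lambda>z. 0) has_real_derivative (u1 z)\<^sup>2 + (v1 z)\<^sup>2) (at z)" for z
    unfolding flux by simp
  then have "(u1 z)\<^sup>2 + (v1 z)\<^sup>2 = 0" for z
    using DERIV_unique DERIV_const by blast
  then have u1: "u1 z = 0" and v1: "v1 z = 0" for z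
    by (simp_all add: sum_power2_eq_zero_iff)
  have "u2 z = 0" "v2 z = 0" for z
    using DERIV_unique[OF du1[of z]] DERIV_unique[OF dv1[of z]] unfolding u1 v1 by auto
  then have "u 1 = 0" "v 1 = 0"
    using ode_u[of 1] ode_v[of 1] \<kappa> u1 v1 by auto
  moreover have "u z = u 1" "v z = v 1"
    using DERIV_isconst_all[of u z 1] DERIV_isconst_all[of v z 1] du dv u1 v1 by auto
  ultimately show ?thesis
    unfolding u_def v_def by (simp add: complex_eq_iff)
qed

lemma L2_solution_unique:
  fixes g g1 g2 g' g1' g2' :: "real \<Rightarrow> complex" and \<kappa> :: real
  assumes \<kappa>: "\<kappa> \<noteq> 0"
    and d1: "\<And>z. (g has_vector_derivative g1 z) (at z)"
    and d2: "\<And>z. (g1 has_vector_derivative g2 z) (at z)"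
    and d1': "\<And>z. (g' has_vector_derivative g1' z) (at z)"
    and d2': "\<And>z. (g1' has_vector_derivative g2' z) (at z)"
    and ode: "\<And>z. g2 z / 2 - of_real z * g1 z + \<i> * of_real \<kappa> * of_real z * g z = r z"
    and ode': "\<And>z. g2' z / 2 - of_real z * g1' z + \<i> * of_real \<kappa> * of_real z * g' z = r z"
    and L2: "integrable lborel (\<lambda>z. (cmod (g z))\<^sup>2 * exp (- z\<^sup>2))"
    and L2': "integrable lborel (\<lambda>z. (cmod (g' z))\<^sup>2 * exp (- z\<^sup>2))"
  shows "g' z = g z"
proof -
  have "g' z - g z = 0"
  proof (rule L2_solution_homogeneous_eq_0[OF \<kappa>])
    show "((\<lambda>z. g' z - g z) has_vector_derivative g1' z - g1 z) (at z)"
      and "((\<lambda>z. g1' z - g1 z) has_vector_derivative g2' z - g2 z) (at z)" for z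
      by (intro derivative_intros d1 d1' d2 d2')+
    show "(g2' z - g2 z) / 2 - of_real z * (g1' z - g1 z) + \<i> * of_real \<kappa> * of_real z * (g' z - g z) = 0"
      for z
      using ode[of z] ode'[of z] by (simp add: algebra_simps diff_divide_distrib)
    show "integrable lborel (\<lambda>z. (cmod (g' z - g z))\<^sup>2 * exp (- z\<^sup>2))"
      using L2 L2' borel_measurable_of_has_vector_derivative[OF d1] borel_measurable_of_has_vector_derivative[OF d1']
      by (intro integrable_weighted_norm_sq_diff) auto
  qed
  then show ?thesis
    by simp
qed

lemma AMZ_fourier_mode:
  fixes g g1 g2 :: "real \<Rightarrow> complex"
  assumes d1: "\<And>z. (g has_vector_derivative g1 z) (at z)"
    and d2: "\<And>z. (g1 has_vector_derivative g2 z) (at z)"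
  shows "AMZ (\<lambda>m z. g z * exp (\<i> * of_int k * of_real m)) m z
    = (g2 z / 2 - of_real z * g1 z + \<i> * of_int k * of_real z * g z) * exp (\<i> * of_int k * of_real m)"
proof -
  define E where "E m = exp (\<i> * of_int k * complex_of_real m)" for m
  have pz1: "pz (\<lambda>m z. g z * E m) m w = g1 w * E m" for m w
    unfolding pz_def by (rule vector_derivative_at) (rule has_vector_derivative_mult_left[OF d1])
  have pz2: "pz (pz (\<lambda>m z. g z * E m)) m z = g2 z * E m"
    unfolding pz_def[of "pz _"] pz1
    by (rule vector_derivative_at) (rule has_vector_derivative_mult_left[OF d2])
  have pm1: "pm (\<lambda>m z. g z * E m) m z = g z * (\<i> * of_int k * E m)"
    unfolding pm_def E_def
    by (rule vector_derivative_at) (rule has_vector_derivative_mult_right[OF has_vector_derivative_exp_of_real])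
  show ?thesis
    unfolding E_def[symmetric] AMZ_def pz1 pz2 pm1 by (simp add: algebra_simps)
qed

lemma admissible_profileE:
  assumes "admissible_profile g"
  obtains g1 g2 where "\<And>z. (g has_vector_derivative g1 z) (at z)"
    and "\<And>z. (g1 has_vector_derivative g2 z) (at z)"
    and "integrable lborel (\<lambda>z. (cmod (g z))\<^sup>2 * exp (- z\<^sup>2))"
proof -
  from assms obtain g1 where d1: "\<And>z. (g has_vector_derivative g1 z) (at z)"
    and "\<And>z. g1 differentiable (at z)" and L2: "integrable lborel (\<lambda>z. (cmod (g z))\<^sup>2 * exp (- z\<^sup>2))"
    unfolding admissible_profile_def by blast
  then have "\<And>z. (g1 has_vector_derivative vector_derivative g1 (at z)) (at z)"
    using vector_derivative_works by blast
  then show ?thesis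
    by (rule that[OF d1 _ L2])
qed

lemma AMZ_inv_exp_eqI:
  fixes g g1 g2 :: "real \<Rightarrow> complex"
  assumes k: "k \<noteq> 0"
    and adm: "admissible_profile g"
    and d1: "\<And>z. (g has_vector_derivative g1 z) (at z)"
    and d2: "\<And>z. (g1 has_vector_derivative g2 z) (at z)"
    and ode: "\<And>z. g2 z / 2 - of_real z * g1 z + \<i> * of_int k * of_real z * g z = 1"
  shows "AMZ_inv_exp k = (\<lambda>m z. g z * exp (\<i> * of_int k * of_real m))"
  unfolding AMZ_inv_exp_def
proof (rule the_equality)
  show "\<exists>g'. admissible_profile g' \<and> (\<lambda>m z. g z * exp (\<i> * of_int k * of_real m))
      = (\<lambda>m z. g' z * exp (\<i> * of_int k * of_real m))
    \<and> (\<forall>m z. AMZ (\<lambda>m z. g z * exp (\<i> * of_int k * of_real m)) m z = exp (\<i> * of_int k * of_real m))"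
    using adm AMZ_fourier_mode[OF d1 d2] ode by auto
next
  fix h assume "\<exists>g'. admissible_profile g' \<and> h = (\<lambda>m z. g' z * exp (\<i> * of_int k * of_real m))
      \<and> (\<forall>m z. AMZ h m z = exp (\<i> * of_int k * of_real m))"
  then obtain g' where adm': "admissible_profile g'"
    and h: "h = (\<lambda>m z. g' z * exp (\<i> * of_int k * of_real m))"
    and A: "\<forall>m z. AMZ h m z = exp (\<i> * of_int k * of_real m)"
    by blast
  obtain g1' g2' where d1': "\<And>z. (g' has_vector_derivative g1' z) (at z)"
    and d2': "\<And>z. (g1' has_vector_derivative g2' z) (at z)"
    and L2': "integrable lborel (\<lambda>z. (cmod (g' z))\<^sup>2 * exp (- z\<^sup>2))"
    using admissible_profileE[OF adm'] by blast
  obtain L2: "integrable lborel (\<lambda>z. (cmod (g z))\<^sup>2 * exp (- z\<^sup>2))"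
    using admissible_profileE[OF adm] by blast
  have ode': "g2' z / 2 - of_real z * g1' z + \<i> * of_int k * of_real z * g' z = 1" for z
    using A[rule_format, of 0 z] unfolding h AMZ_fourier_mode[OF d1' d2'] by simp
  have "g' z = g z" for z
  proof (rule L2_solution_unique[where \<kappa>="of_int k" and r="\<lambda>_. 1", OF _ d1 d2 d1' d2' _ _ L2 L2'])
    show "real_of_int k \<noteq> 0"
      using k by simp
    show "g2 z / 2 - of_real z * g1 z + \<i> * of_real (of_int k) * of_real z * g z = 1"
      and "g2' z / 2 - of_real z * g1' z + \<i> * of_real (of_int k) * of_real z * g' z = 1" for z
      using ode[of z] ode'[of z] by simp_all
  qed
  then show "h = (\<lambda>m z. g z * exp (\<i> * of_int k * of_real m))"
    unfolding h by simp
qed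

section \<open>The Feynman--Kac profile\<close>

text \<open>Given \<open>Z(0) = z\<close>, the increment \<open>M(t) - M(0)\<close> is Gaussian with mean \<open>z * mz_mean t\<close> and
  variance \<open>mz_variance t\<close>, so \<open>mz_char \<kappa> z t\<close> is its characteristic function at \<open>\<kappa>\<close>.
  By the Feynman--Kac formula, \<open>- mz_profile k 0\<close> is the profile of \<open>AMZ_inv_exp k\<close>, and
  \<open>mz_profile \<kappa> j\<close> is its \<open>j\<close>-th derivative.\<close>

definition mz_mean :: "real \<Rightarrow> real" where
  "mz_mean t = 1 - exp (- t)"

definition mz_variance :: "real \<Rightarrow> real" where
  "mz_variance t = t - 2 * (1 - exp (- t)) + (1 - exp (- 2 * t)) / 2"

definition mz_char :: "real \<Rightarrow> real \<Rightarrow> real \<Rightarrow> complex" where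
  "mz_char \<kappa> z t = of_real (exp (- \<kappa>\<^sup>2 * mz_variance t / 2)) * exp (\<i> * of_real (\<kappa> * mz_mean t) * of_real z)"

definition mz_kernel :: "real \<Rightarrow> nat \<Rightarrow> real \<Rightarrow> real \<Rightarrow> complex" where
  "mz_kernel \<kappa> j z t = indicator {0<..} t *\<^sub>R ((\<i> * of_real (\<kappa> * mz_mean t)) ^ j * mz_char \<kappa> z t)"

definition mz_profile :: "real \<Rightarrow> nat \<Rightarrow> real \<Rightarrow> complex" where
  "mz_profile \<kappa> j z = (LINT t|lborel. mz_kernel \<kappa> j z t)"

definition mz_majorant :: "real \<Rightarrow> real \<Rightarrow> real" where
  "mz_majorant \<kappa> t = indicator {0<..} t * (exp (\<kappa>\<^sup>2) * exp (- (\<kappa>\<^sup>2 / 2) * t))"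

lemma mz_mean_bounds: "0 \<le> t \<Longrightarrow> 0 \<le> mz_mean t \<and> mz_mean t \<le> 1"
  unfolding mz_mean_def by auto

lemma norm_mz_char: "cmod (mz_char \<kappa> z t) = exp (- \<kappa>\<^sup>2 * mz_variance t / 2)"
  unfolding mz_char_def by (simp add: norm_mult)

lemma exp_mz_variance_le:
  assumes t: "0 \<le> t"
  shows "exp (- \<kappa>\<^sup>2 * mz_variance t / 2) \<le> exp (\<kappa>\<^sup>2) * exp (- (\<kappa>\<^sup>2 / 2) * t)"
proof -
  have "exp (- 2 * t) \<le> 1"
    using t by simp
  then have "t - 2 \<le> mz_variance t"
    unfolding mz_variance_def using exp_gt_zero[of "- t"] by simp
  then have "\<kappa>\<^sup>2 * (t - 2) \<le> \<kappa>\<^sup>2 * mz_variance t"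
    by (rule mult_left_mono) simp
  then have "- \<kappa>\<^sup>2 * mz_variance t / 2 \<le> \<kappa>\<^sup>2 + - (\<kappa>\<^sup>2 / 2) * t"
    by (simp add: algebra_simps)
  then show ?thesis
    by (simp flip: exp_add)
qed

lemma integrable_mz_majorant:
  assumes "\<kappa> \<noteq> 0"
  shows "integrable lborel (mz_majorant \<kappa>)"
proof -
  have "set_integrable lborel {0<..} (\<lambda>t. exp (- (\<kappa>\<^sup>2 / 2) * t))"
    using set_integral_exp_neg_mult_Ioi(1)[of "\<kappa>\<^sup>2 / 2"] assms by simp
  then have "integrable lborel (\<lambda>t. exp (\<kappa>\<^sup>2) * (indicator {0<..} t * exp (- (\<kappa>\<^sup>2 / 2) * t)))"
    unfolding set_integrable_def by simp
  then show ?thesis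
    unfolding mz_majorant_def by (simp add: ac_simps)
qed

lemma norm_mz_kernel_le: "cmod (mz_kernel \<kappa> j z t) \<le> \<bar>\<kappa>\<bar> ^ j * mz_majorant \<kappa> t"
proof (cases "t > 0")
  case True
  have "cmod (mz_kernel \<kappa> j z t) = \<bar>\<kappa> * mz_mean t\<bar> ^ j * exp (- \<kappa>\<^sup>2 * mz_variance t / 2)"
    unfolding mz_kernel_def using True by (simp add: norm_mult norm_power norm_mz_char abs_mult)
  also have "\<dots> \<le> \<bar>\<kappa>\<bar> ^ j * (exp (\<kappa>\<^sup>2) * exp (- (\<kappa>\<^sup>2 / 2) * t))"
  proof (intro mult_mono power_mono exp_mz_variance_le)
    show "\<bar>\<kappa> * mz_mean t\<bar> \<le> \<bar>\<kappa>\<bar>"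
      using mz_mean_bounds[of t] True by (simp add: abs_mult mult_left_le)
  qed (use True in auto)
  finally show ?thesis
    using True by (simp add: mz_majorant_def)
qed (simp add: mz_kernel_def mz_majorant_def)

lemma norm_mz_kernel_0: "cmod (mz_kernel \<kappa> 0 z t) = indicator {0<..} t * exp (- \<kappa>\<^sup>2 * mz_variance t / 2)"
  by (simp add: mz_kernel_def norm_mz_char)

lemma borel_measurable_mz_kernel: "mz_kernel \<kappa> j z \<in> borel_measurable lborel"
proof -
  have cont: "(\<lambda>t. (\<i> * of_real (\<kappa> * mz_mean t)) ^ j * mz_char \<kappa> z t) \<in> borel_measurable borel"
    unfolding mz_char_def mz_mean_def mz_variance_def
    by (intro borel_measurable_continuous_onI continuous_intros; simp)
  have "(indicator {0<..} :: real \<Rightarrow> real) \<in> borel_measurable borel"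
    by (rule borel_measurable_indicator) simp
  from borel_measurable_scaleR[OF this cont] show ?thesis
    unfolding mz_kernel_def by simp
qed

lemma integrable_mz_kernel:
  assumes "\<kappa> \<noteq> 0"
  shows "integrable lborel (mz_kernel \<kappa> j z)"
proof (rule Bochner_Integration.integrable_bound)
  show "integrable lborel (\<lambda>t. \<bar>\<kappa>\<bar> ^ j * mz_majorant \<kappa> t)"
    using integrable_mz_majorant[OF assms] by simp
  show "AE t in lborel. norm (mz_kernel \<kappa> j z t) \<le> norm (\<bar>\<kappa>\<bar> ^ j * mz_majorant \<kappa> t)"
    using norm_mz_kernel_le[of \<kappa> j z] by (intro AE_I2) (simp add: order_trans[OF _ abs_ge_self])
qed (rule borel_measurable_mz_kernel)

lemma mz_kernel_has_vector_derivative: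
  "((\<lambda>z. mz_kernel \<kappa> j z t) has_vector_derivative mz_kernel \<kappa> (Suc j) z t) (at z)"
proof -
  define c where "c = \<i> * of_real (\<kappa> * mz_mean t)"
  have "((\<lambda>z. indicator {0<..} t *\<^sub>R (c ^ j * of_real (exp (- \<kappa>\<^sup>2 * mz_variance t / 2)))
      * exp (c * of_real z)) has_vector_derivative
      indicator {0<..} t *\<^sub>R (c ^ j * of_real (exp (- \<kappa>\<^sup>2 * mz_variance t / 2))) * (c * exp (c * of_real z))) (at z)"
    by (intro has_vector_derivative_mult_right has_vector_derivative_exp_of_real)
  then show ?thesis
    unfolding mz_kernel_def mz_char_def c_def[symmetric] by (simp add: ac_simps)
qed

lemma mz_profile_has_vector_derivative:
  assumes "\<kappa> \<noteq> 0"
  shows "(mz_profile \<kappa> j has_vector_derivative mz_profile \<kappa> (Suc j) z) (at z)"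
  unfolding mz_profile_def
proof (rule has_vector_derivative_integral_dominated[where w="\<lambda>t. \<bar>\<kappa>\<bar> ^ Suc j * mz_majorant \<kappa> t"])
  show "integrable lborel (\<lambda>t. \<bar>\<kappa>\<bar> ^ Suc j * mz_majorant \<kappa> t)"
    using integrable_mz_majorant[OF assms] by (simp del: power_Suc)
qed (rule borel_measurable_mz_kernel integrable_mz_kernel[OF assms] mz_kernel_has_vector_derivative
    norm_mz_kernel_le)+

text \<open>The backward Kolmogorov equation: in \<open>t\<close>, the characteristic function evolves by the
  generator, with \<open>\<partial>\<^sub>z\<close> acting as multiplication by \<open>\<i> \<kappa> mz_mean t\<close> and \<open>\<partial>\<^sub>m\<close> as \<open>\<i> \<kappa>\<close>.\<close>

lemma mz_char_backward_equation:
  "(mz_char \<kappa> z has_vector_derivative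
     ((\<i> * of_real (\<kappa> * mz_mean t))\<^sup>2 / 2 - of_real z * (\<i> * of_real (\<kappa> * mz_mean t))
       + \<i> * of_real \<kappa> * of_real z) * mz_char \<kappa> z t) (at t)"
proof -
  define D where "D t = exp (- \<kappa>\<^sup>2 * mz_variance t / 2)" for t
  define E where "E t = exp (\<i> * of_real (\<kappa> * mz_mean t) * of_real z)" for t
  have mean_deriv: "(mz_mean has_real_derivative 1 - mz_mean t) (at t)"
    unfolding mz_mean_def by (auto intro!: derivative_eq_intros)
  have "(mz_variance has_real_derivative 1 - 2 * exp (- t) + exp (- 2 * t)) (at t)"
    unfolding mz_variance_def[abs_def] by (auto intro!: derivative_eq_intros)
  moreover have "1 - 2 * exp (- t) + exp (- 2 * t) = (mz_mean t)\<^sup>2"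
    unfolding mz_mean_def by (simp add: power2_eq_square algebra_simps flip: exp_add)
  ultimately have "(D has_real_derivative D t * (- \<kappa>\<^sup>2 * (mz_mean t)\<^sup>2 / 2)) (at t)"
    unfolding D_def[abs_def] by (auto intro!: derivative_eq_intros)
  moreover have "(E has_vector_derivative (\<i> * of_real (\<kappa> * (1 - mz_mean t)) * of_real z) * E t) (at t)"
  proof -
    have "((\<lambda>t. \<i> * of_real (\<kappa> * mz_mean t) * of_real z) has_vector_derivative
        \<i> * of_real (\<kappa> * (1 - mz_mean t)) * of_real z) (at t)"
      by (intro has_vector_derivative_mult_left has_vector_derivative_mult_right
          has_vector_derivative_of_real DERIV_cmult mean_deriv)
    from field_vector_diff_chain_at[OF this DERIV_exp] show ?thesis
      unfolding E_def o_def by (simp add: mult.commute)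
  qed
  ultimately have "((\<lambda>t. of_real (D t) * E t) has_vector_derivative
      of_real (D t) * ((\<i> * of_real (\<kappa> * (1 - mz_mean t)) * of_real z) * E t)
      + of_real (D t * (- \<kappa>\<^sup>2 * (mz_mean t)\<^sup>2 / 2)) * E t) (at t)"
    by (rule has_vector_derivative_mult[OF has_vector_derivative_of_real])
  moreover have "of_real (D t) * ((\<i> * of_real (\<kappa> * (1 - mz_mean t)) * of_real z) * E t)
      + of_real (D t * (- \<kappa>\<^sup>2 * (mz_mean t)\<^sup>2 / 2)) * E t
    = ((\<i> * of_real (\<kappa> * mz_mean t))\<^sup>2 / 2 - of_real z * (\<i> * of_real (\<kappa> * mz_mean t))
       + \<i> * of_real \<kappa> * of_real z) * (of_real (D t) * E t)"
    by (simp add: algebra_simps power2_eq_square)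
  ultimately show ?thesis
    unfolding mz_char_def D_def E_def by (simp add: fun_eq_iff)
qed

lemma mz_kernel_generator:
  "mz_kernel \<kappa> 2 z t / 2 - of_real z * mz_kernel \<kappa> 1 z t + \<i> * of_real \<kappa> * of_real z * mz_kernel \<kappa> 0 z t
    = indicator {0<..} t *\<^sub>R (((\<i> * of_real (\<kappa> * mz_mean t))\<^sup>2 / 2
        - of_real z * (\<i> * of_real (\<kappa> * mz_mean t)) + \<i> * of_real \<kappa> * of_real z) * mz_char \<kappa> z t)"
  unfolding mz_kernel_def by (simp add: indicator_def algebra_simps)

lemma mz_profile_ode:
  assumes \<kappa>: "\<kappa> \<noteq> 0"
  shows "mz_profile \<kappa> 2 z / 2 - of_real z * mz_profile \<kappa> 1 z + \<i> * of_real \<kappa> * of_real z * mz_profile \<kappa> 0 z = -1"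
proof -
  define q where "q t = ((\<i> * of_real (\<kappa> * mz_mean t))\<^sup>2 / 2
        - of_real z * (\<i> * of_real (\<kappa> * mz_mean t)) + \<i> * of_real \<kappa> * of_real z) * mz_char \<kappa> z t" for t
  have combination: "(\<lambda>t. mz_kernel \<kappa> 2 z t / 2 - of_real z * mz_kernel \<kappa> 1 z t
      + \<i> * of_real \<kappa> * of_real z * mz_kernel \<kappa> 0 z t) = (\<lambda>t. indicator {0<..} t *\<^sub>R q t)"
    unfolding mz_kernel_generator q_def ..
  have "mz_profile \<kappa> 2 z / 2 - of_real z * mz_profile \<kappa> 1 z + \<i> * of_real \<kappa> * of_real z * mz_profile \<kappa> 0 z
      = (LINT t|lborel. mz_kernel \<kappa> 2 z t / 2 - of_real z * mz_kernel \<kappa> 1 z t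
          + \<i> * of_real \<kappa> * of_real z * mz_kernel \<kappa> 0 z t)"
    unfolding mz_profile_def using integrable_mz_kernel[OF \<kappa>] by simp
  also have "\<dots> = set_lebesgue_integral lborel {0<..} q"
    unfolding combination set_lebesgue_integral_def ..
  also have "\<dots> = 0 - 1"
  proof (rule set_integral_Ioi_FTC[where Q="mz_char \<kappa> z"])
    show "(mz_char \<kappa> z has_vector_derivative q t) (at t)" for t
      unfolding q_def by (rule mz_char_backward_equation)
    show "isCont q t" for t
      unfolding q_def mz_char_def mz_mean_def mz_variance_def by (intro continuous_intros; simp)
    show "set_integrable lborel {0<..} q"
      unfolding set_integrable_def combination[symmetric] using integrable_mz_kernel[OF \<kappa>] by simp
    have "isCont (mz_char \<kappa> z) 0"
      unfolding mz_char_def mz_mean_def mz_variance_def by (intro continuous_intros; simp)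
    moreover have "mz_char \<kappa> z 0 = 1"
      by (simp add: mz_char_def mz_mean_def mz_variance_def)
    ultimately show "(mz_char \<kappa> z \<longlongrightarrow> 1) (at_right 0)"
      unfolding isCont_def by (auto intro: tendsto_mono[OF at_le])
    show "(mz_char \<kappa> z \<longlongrightarrow> 0) at_top"
    proof (rule Lim_null_comparison)
      show "\<forall>\<^sub>F t in at_top. norm (mz_char \<kappa> z t) \<le> exp (\<kappa>\<^sup>2) * exp (- (\<kappa>\<^sup>2 / 2) * t)"
        using eventually_ge_at_top[of "0::real"]
        unfolding norm_mz_char by eventually_elim (rule exp_mz_variance_le)
      have "((\<lambda>t. exp (- (\<kappa>\<^sup>2 / 2) * t)) \<longlongrightarrow> 0) at_top"
        using \<kappa> by real_asymp
      then show "((\<lambda>t. exp (\<kappa>\<^sup>2) * exp (- (\<kappa>\<^sup>2 / 2) * t)) \<longlongrightarrow> 0) at_top"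
        by (rule tendsto_mult_right_zero)
    qed
  qed
  finally show ?thesis
    by simp
qed

lemma norm_mz_profile_le:
  assumes "\<kappa> \<noteq> 0"
  shows "cmod (mz_profile \<kappa> 0 z) \<le> integral\<^sup>L lborel (mz_majorant \<kappa>)"
proof -
  have "cmod (mz_profile \<kappa> 0 z) \<le> (LINT t|lborel. cmod (mz_kernel \<kappa> 0 z t))"
    unfolding mz_profile_def by (rule integral_norm_bound)
  also have "\<dots> \<le> integral\<^sup>L lborel (mz_majorant \<kappa>)"
    using integrable_mz_kernel[OF assms] integrable_mz_majorant[OF assms] norm_mz_kernel_le[of \<kappa> 0 z]
    by (intro integral_mono) auto
  finally show ?thesis .
qed

lemma admissible_profile_mz_profile:
  assumes \<kappa>: "\<kappa> \<noteq> 0"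
  shows "admissible_profile (\<lambda>z. - mz_profile \<kappa> 0 z)"
  unfolding admissible_profile_def
proof (intro conjI exI[of _ "\<lambda>z. - mz_profile \<kappa> 1 z"] allI)
  show deriv: "((\<lambda>z. - mz_profile \<kappa> 0 z) has_vector_derivative - mz_profile \<kappa> 1 z) (at z)" for z
    using has_vector_derivative_minus[OF mz_profile_has_vector_derivative[OF \<kappa>, of 0 z]] by simp
  show "(\<lambda>z. - mz_profile \<kappa> 1 z) differentiable at z" for z
    using mz_profile_has_vector_derivative[OF \<kappa>, of 1 z]
    by (intro differentiable_minus) (auto simp: differentiable_def has_vector_derivative_def)
  define C where "C = integral\<^sup>L lborel (mz_majorant \<kappa>)"
  have bound: "(cmod (- mz_profile \<kappa> 0 z))\<^sup>2 * exp (- z\<^sup>2) \<le> C\<^sup>2 * exp (- z\<^sup>2)" for z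
    using norm_mz_profile_le[OF \<kappa>, of z] unfolding C_def by (simp add: power_mono)
  have "integrable lborel (\<lambda>z. C\<^sup>2 * exp (- z\<^sup>2))"
    using integrable_exp_neg_square by simp
  moreover have "(\<lambda>z. (cmod (- mz_profile \<kappa> 0 z))\<^sup>2 * exp (- z\<^sup>2)) \<in> borel_measurable lborel"
    using borel_measurable_of_has_vector_derivative[OF deriv] by measurable
  moreover have "AE z in lborel. norm ((cmod (- mz_profile \<kappa> 0 z))\<^sup>2 * exp (- z\<^sup>2))
      \<le> norm (C\<^sup>2 * exp (- z\<^sup>2))"
    using bound by (intro AE_I2) (simp add: order_trans[OF _ abs_ge_self])
  ultimately show "integrable lborel (\<lambda>z. (cmod (- mz_profile \<kappa> 0 z))\<^sup>2 * exp (- z\<^sup>2))"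
    by (rule Bochner_Integration.integrable_bound)
qed

lemma AMZ_inv_exp_eq_mz_profile:
  assumes k: "k \<noteq> 0"
  shows "AMZ_inv_exp k = (\<lambda>m z. - mz_profile (of_int k) 0 z * exp (\<i> * of_int k * of_real m))"
proof (rule AMZ_inv_exp_eqI[OF k admissible_profile_mz_profile])
  have \<kappa>: "real_of_int k \<noteq> 0"
    using k by simp
  show "((\<lambda>z. - mz_profile (of_int k) 0 z) has_vector_derivative - mz_profile (of_int k) 1 z) (at z)"
    and "((\<lambda>z. - mz_profile (of_int k) 1 z) has_vector_derivative - mz_profile (of_int k) 2 z) (at z)" for z
    using has_vector_derivative_minus[OF mz_profile_has_vector_derivative[OF \<kappa>, of 0 z]]
      has_vector_derivative_minus[OF mz_profile_has_vector_derivative[OF \<kappa>, of 1 z]]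
    by (simp_all add: numeral_2_eq_2)
  show "- mz_profile (of_int k) 2 z / 2 - of_real z * - mz_profile (of_int k) 1 z
      + \<i> * of_int k * of_real z * - mz_profile (of_int k) 0 z = 1" for z
    using mz_profile_ode[OF \<kappa>, of z] by (simp add: algebra_simps)
qed (use k in simp)

section \<open>Evaluation of the form\<close>

lemma MZ_form_exp_eq_profile_integral:
  assumes k: "k \<noteq> 0"
  shows "MZ_form_exp l k = (if k = l then 1 else 0)
    * (LINT z|lborel. mz_profile (of_int k) 0 z * of_real (exp (- z\<^sup>2) / sqrt pi))"
proof -
  define G where "G z = mz_profile (of_int k) 0 z * of_real (exp (- z\<^sup>2) / sqrt pi)" for z
  have "(LBINT m=0..2*pi. cnj (exp (\<i> * of_int l * of_real m)) * AMZ_inv_exp k m z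
        * of_real (1 / (2*pi) * exp (- z\<^sup>2) / sqrt pi))
      = - (if k = l then 1 else 0) * G z" for z
  proof -
    have "(LBINT m=0..2*pi. cnj (exp (\<i> * of_int l * of_real m)) * AMZ_inv_exp k m z
          * of_real (1 / (2*pi) * exp (- z\<^sup>2) / sqrt pi))
        = (LBINT m=0..2*pi. (- G z / of_real (2 * pi))
          * (cnj (exp (\<i> * of_int l * of_real m)) * exp (\<i> * of_int k * of_real m)))"
      unfolding AMZ_inv_exp_eq_mz_profile[OF k] G_def by (simp add: field_simps)
    also have "\<dots> = - (if k = l then 1 else 0) * G z"
      unfolding interval_lebesgue_integral_mult_right interval_integral_fourier_modes by simp
    finally show ?thesis .
  qed
  then show ?thesis
    unfolding MZ_form_exp_def G_def by simp
qed

lemma integrable_mz_kernel_gaussian: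
  assumes \<kappa>: "\<kappa> \<noteq> 0"
  shows "integrable (lborel \<Otimes>\<^sub>M lborel) (\<lambda>(t, z). mz_kernel \<kappa> 0 z t * of_real (exp (- z\<^sup>2)))"
proof (rule lborel_pair.Fubini_integrable)
  define C where "C p = mz_char \<kappa> (snd p) (fst p) * of_real (exp (- (snd p)\<^sup>2))" for p :: "real \<times> real"
  have "C \<in> borel_measurable borel"
    unfolding C_def mz_char_def mz_mean_def mz_variance_def
    by (intro borel_measurable_continuous_onI continuous_intros; simp)
  moreover have "(indicator ({0<..} \<times> UNIV) :: real \<times> real \<Rightarrow> real) \<in> borel_measurable borel"
    by (intro borel_measurable_indicator borel_open open_Times) auto
  ultimately have "(\<lambda>p. indicator ({0<..} \<times> UNIV) p *\<^sub>R C p) \<in> borel_measurable borel"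
    by (rule borel_measurable_scaleR[rotated])
  moreover have "(\<lambda>(t, z). mz_kernel \<kappa> 0 z t * of_real (exp (- z\<^sup>2))) = (\<lambda>p. indicator ({0<..} \<times> UNIV) p *\<^sub>R C p)"
    by (auto simp: fun_eq_iff C_def mz_kernel_def indicator_def)
  ultimately show "(\<lambda>(t, z). mz_kernel \<kappa> 0 z t * of_real (exp (- z\<^sup>2))) \<in> borel_measurable (lborel \<Otimes>\<^sub>M lborel)"
    unfolding lborel_prod measurable_lborel2 by simp
  have "(LINT z|lborel. norm (mz_kernel \<kappa> 0 z t * of_real (exp (- z\<^sup>2)))) = sqrt pi * cmod (mz_kernel \<kappa> 0 0 t)"
    for t
    using integral_exp_neg_square by (simp add: norm_mult norm_mz_kernel_0)
  then show "integrable lborel (\<lambda>t. LINT z|lborel. norm (case (t, z) of (t, z) \<Rightarrow> mz_kernel \<kappa> 0 z t * of_real (exp (- z\<^sup>2))))"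
    using integrable_mz_kernel[OF \<kappa>, of 0 0] by simp
  have "integrable lborel (\<lambda>z. mz_kernel \<kappa> 0 z t * of_real (exp (- z\<^sup>2)))" for t
  proof (rule Bochner_Integration.integrable_bound)
    show "integrable lborel (\<lambda>z. cmod (mz_kernel \<kappa> 0 0 t) * exp (- z\<^sup>2))"
      using integrable_exp_neg_square by simp
    have "(\<lambda>z. mz_kernel \<kappa> 0 z t * of_real (exp (- z\<^sup>2))) \<in> borel_measurable borel"
      unfolding mz_kernel_def mz_char_def
      by (intro borel_measurable_continuous_onI continuous_intros)
    then show "(\<lambda>z. mz_kernel \<kappa> 0 z t * of_real (exp (- z\<^sup>2))) \<in> borel_measurable lborel"
      by simp
    show "AE z in lborel. norm (mz_kernel \<kappa> 0 z t * of_real (exp (- z\<^sup>2)))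
        \<le> norm (cmod (mz_kernel \<kappa> 0 0 t) * exp (- z\<^sup>2))"
      by (intro AE_I2) (simp add: norm_mult norm_mz_kernel_0)
  qed
  then show "AE t in lborel. integrable lborel (\<lambda>z. case (t, z) of (t, z) \<Rightarrow> mz_kernel \<kappa> 0 z t * of_real (exp (- z\<^sup>2)))"
    by simp
qed

lemma integral_mz_profile_gaussian:
  assumes \<kappa>: "\<kappa> \<noteq> 0"
  shows "(LINT z|lborel. mz_profile \<kappa> 0 z * of_real (exp (- z\<^sup>2))) = of_real (sqrt pi)
    * of_real (LINT t|lborel. indicator {0<..} t * (exp (- \<kappa>\<^sup>2 * mz_variance t / 2) * exp (- (\<kappa> * mz_mean t)\<^sup>2 / 4)))"
proof -
  have inner: "(LINT z|lborel. mz_kernel \<kappa> 0 z t * of_real (exp (- z\<^sup>2)))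
      = of_real (sqrt pi) * of_real (indicator {0<..} t * (exp (- \<kappa>\<^sup>2 * mz_variance t / 2) * exp (- (\<kappa> * mz_mean t)\<^sup>2 / 4)))"
    for t
  proof -
    have "(LINT z|lborel. mz_kernel \<kappa> 0 z t * of_real (exp (- z\<^sup>2)))
        = of_real (indicator {0<..} t * exp (- \<kappa>\<^sup>2 * mz_variance t / 2))
          * (LINT z|lborel. exp (\<i> * of_real (\<kappa> * mz_mean t) * of_real z) * of_real (exp (- z\<^sup>2)))"
      unfolding mz_kernel_def mz_char_def by (simp add: scaleR_conv_of_real mult.assoc)
    then show ?thesis
      unfolding integral_exp_i_mult_gaussian by (simp add: mult_ac)
  qed
  have "(LINT z|lborel. mz_profile \<kappa> 0 z * of_real (exp (- z\<^sup>2)))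
      = (LINT z|lborel. LINT t|lborel. mz_kernel \<kappa> 0 z t * of_real (exp (- z\<^sup>2)))"
    unfolding mz_profile_def by simp
  also have "\<dots> = (LINT t|lborel. LINT z|lborel. mz_kernel \<kappa> 0 z t * of_real (exp (- z\<^sup>2)))"
    using lborel_pair.Fubini_integral[OF integrable_mz_kernel_gaussian[OF \<kappa>]] by simp
  also have "\<dots> = of_real (sqrt pi) * of_real (LINT t|lborel. indicator {0<..} t
      * (exp (- \<kappa>\<^sup>2 * mz_variance t / 2) * exp (- (\<kappa> * mz_mean t)\<^sup>2 / 4)))"
    unfolding inner by (simp flip: integral_complex_of_real)
  finally show ?thesis .
qed

lemma mz_gaussian_exponent:
  "exp (- \<kappa>\<^sup>2 * mz_variance t / 2) * exp (- (\<kappa> * mz_mean t)\<^sup>2 / 4)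
    = exp (\<kappa>\<^sup>2 / 2) * (exp (- (\<kappa>\<^sup>2 / 2) * t) * exp (- (\<kappa>\<^sup>2 / 2) * exp (- t)))"
proof -
  have "exp (- 2 * t) = exp (- t) * exp (- t)"
    by (simp flip: exp_add)
  then have "- \<kappa>\<^sup>2 * mz_variance t / 2 + - (\<kappa> * mz_mean t)\<^sup>2 / 4
      = \<kappa>\<^sup>2 / 2 + (- (\<kappa>\<^sup>2 / 2) * t + - (\<kappa>\<^sup>2 / 2) * exp (- t))"
    unfolding mz_variance_def mz_mean_def by (simp add: power2_eq_square field_simps)
  then show ?thesis
    by (simp flip: exp_add)
qed

lemma MZ_form_exp_eq_series:
  assumes k: "k \<noteq> 0"
  shows "MZ_form_exp l k = complex_of_real (exp ((real_of_int k)\<^sup>2 / 2) * (if k = l then 1 else 0)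
    * (\<Sum>n. (-1) ^ n * (real_of_int k) ^ (2*n) / ((real n + (real_of_int k)\<^sup>2 / 2) * 2 ^ n * fact n)))"
proof -
  define \<kappa> where "\<kappa> = real_of_int k"
  define c where "c = \<kappa>\<^sup>2 / 2"
  have \<kappa>: "\<kappa> \<noteq> 0" and c: "c > 0"
    using k by (simp_all add: \<kappa>_def c_def)
  have "(LINT z|lborel. mz_profile \<kappa> 0 z * of_real (exp (- z\<^sup>2) / sqrt pi))
      = (LINT z|lborel. mz_profile \<kappa> 0 z * of_real (exp (- z\<^sup>2))) / of_real (sqrt pi)"
    by simp
  also have "\<dots> = of_real (LINT t|lborel. exp c * (indicator {0<..} t * (exp (- c * t) * exp (- c * exp (- t)))))"
    unfolding integral_mz_profile_gaussian[OF \<kappa>] mz_gaussian_exponent c_def by (simp add: ac_simps)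
  also have "\<dots> = of_real (exp c * (\<Sum>n. (- c) ^ n / (fact n * (real n + c))))"
    unfolding integral_mult_right_zero integral_exp_neg_exp_series[OF c] ..
  also have "(\<lambda>n. (- c) ^ n / (fact n * (real n + c)))
      = (\<lambda>n. (-1) ^ n * \<kappa> ^ (2*n) / ((real n + \<kappa>\<^sup>2 / 2) * 2 ^ n * fact n))"
  proof
    fix n
    have "(- c) ^ n = (-1) ^ n * \<kappa> ^ (2*n) / 2 ^ n"
      unfolding c_def by (simp add: power_minus[of "\<kappa>\<^sup>2 / 2"] power_divide power_mult)
    then show "(- c) ^ n / (fact n * (real n + c)) = (-1) ^ n * \<kappa> ^ (2*n) / ((real n + \<kappa>\<^sup>2 / 2) * 2 ^ n * fact n)"
      unfolding c_def by (simp only: divide_divide_eq_left mult_ac)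
  qed
  finally show ?thesis
    unfolding MZ_form_exp_eq_profile_integral[OF k] \<kappa>_def c_def by simp
qed

lemma MZ_form_exp_1_1: "MZ_form_exp 1 1 = complex_of_real (sqrt (2 * exp 1 * pi) * erf (1 / sqrt 2))"
proof -
  define c where "c n = (-1) ^ n / (2 ^ n * fact n * real (2*n+1))" for n :: nat
  have "norm (c n) \<le> inverse (fact n) * (1 / 2) ^ n" for n
  proof -
    have "norm (c n) = 1 / (2 ^ n * fact n * real (2*n+1))"
      unfolding c_def by (simp add: abs_mult)
    also have "\<dots> \<le> 1 / (2 ^ n * fact n)"
      by (intro divide_left_mono) auto
    also have "\<dots> = inverse (fact n) * (1 / 2) ^ n"
      by (simp add: field_simps)
    finally show ?thesis .
  qed
  then have "summable c"
    by (intro summable_comparison_test[OF _ summable_exp[of "1 / 2"]]) auto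
  have "(-1) ^ n / ((real n + 1 / 2) * 2 ^ n * fact n) = 2 * c n" for n
  proof -
    have "real n + 1 / 2 \<noteq> 0"
      using of_nat_0_le_iff[of n] by linarith
    then show ?thesis
      unfolding c_def by (simp add: field_simps)
  qed
  then have series: "(\<Sum>n. (-1) ^ n / ((real n + 1 / 2) * 2 ^ n * fact n)) = 2 * (\<Sum>n. c n)"
    using suminf_mult[OF \<open>summable c\<close>, of 2] by simp
  have "(-1) ^ n * (1 / sqrt 2) ^ (2*n+1) / (fact n * real (2*n+1)) = c n / sqrt 2" for n
  proof -
    have "(1 / sqrt 2) ^ (2*n+1) = 1 / (2 ^ n * sqrt (2::real))"
      by (simp add: power_mult power_add power_divide)
    then show ?thesis
      unfolding c_def by (simp add: field_simps)
  qed
  then have erf: "erf (1 / sqrt 2) = 2 / sqrt pi * ((\<Sum>n. c n) / sqrt 2)"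
    unfolding erf_def using suminf_divide[OF \<open>summable c\<close>, of "sqrt 2"]
    by (subst interval_integral_exp_neg_square_series) auto
  have "exp 1 = (exp (1 / 2 :: real))\<^sup>2"
    by (simp add: power2_eq_square flip: exp_add)
  then have "sqrt (exp 1) = exp (1 / 2 :: real)"
    by simp
  then show ?thesis
    using MZ_form_exp_eq_series[of 1 1] by (simp add: series erf real_sqrt_mult)
qed

theorem mainTheorem7:
  fixes k l :: int
  assumes "k \<noteq> 0" and "l \<noteq> 0"
  shows "(MZ_form_exp l k =
           complex_of_real (exp ((real_of_int k)\<^sup>2 / 2) * (if k = l then 1 else 0)
             * (\<Sum>n. (-1) ^ n * (real_of_int k) ^ (2*n)
                    / ((real n + (real_of_int k)\<^sup>2 / 2) * 2 ^ n * fact n))))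
         \<and> MZ_form_exp 1 1 = complex_of_real (sqrt (2 * exp 1 * pi) * erf (1 / sqrt 2))"
  using MZ_form_exp_eq_series[OF assms(1)] MZ_form_exp_1_1 by simp

end
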